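(* Let $G=(V,E)$ be a graph with $n$ vertices and integer edge weights $w\colon E\to\{1,\dots,W\}$, let $\beta\in(0,1]$, and run the clustering defined in the context with $p=\beta/4$ and $r=\left\lceil \frac{1}{p}\ln\!\left(\frac{n^2}{p}\right)+\frac{1}{4p}\right\rceil$. Then for every edge $(u,v)\in E$, the probability that $u$ and $v$ belong to different clusters (i.e., $c_u\neq c_v$) is at most $4p\cdot w(u,v)$.
   Context: Setting (the clustering): $G=(V,E)$ has integer edge weights, $d_G$ is the weighted shortest-path distance, and each vertex has a distinct identifier $\mathrm{ID}(v)$. For $p\in(0,1)$, $r\in\mathbb{N}$, let $\mathrm{GeomCap}(p,r)$ be the distribution on $\{0,\dots,r\}$ with $\Pr[=i]=p(1-p)^i$ for $0\leq i\leq r-1$ and $\Pr[=r]=(1-p)^r$. Each vertex $v$ independently samples $\delta_v\sim\mathrm{GeomCap}(p,r)$. For $u,x\in V$ define $d^{(u)}(s,x):=r-\delta_u+d_G(u,x)$ and $d_{G'}(s,x):=\min_{u\in V} d^{(u)}(s,x)$. The cluster center $c_x$ of $x$ is the vertex $u$ with smallest $\mathrm{ID}$ among those with $d^{(u)}(s,x)=d_{G'}(s,x)$; the cluster of a center $c$ is $\{x\in V: c_x=c\}$. *)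

theory Defs
  imports "HOL-Probability.Probability" "HOL-Library.Extended_Nat"
begin

definition geom_cap :: "real \<Rightarrow> nat \<Rightarrow> nat pmf" where
  "geom_cap p r = embed_pmf (\<lambda>i. if i < r then p * (1 - p) ^ i
                                  else if i = r then (1 - p) ^ r else 0)"

definition is_walk :: "'a set \<Rightarrow> ('a \<times> 'a) set \<Rightarrow> 'a list \<Rightarrow> 'a \<Rightarrow> 'a \<Rightarrow> bool" where
  "is_walk V E xs u x \<longleftrightarrow> xs \<noteq> [] \<and> set xs \<subseteq> V \<and> hd xs = u \<and> last xs = x \<and>
     (\<forall>i < length xs - 1. (xs ! i, xs ! Suc i) \<in> E)"

definition walk_weight :: "('a \<Rightarrow> 'a \<Rightarrow> nat) \<Rightarrow> 'a list \<Rightarrow> nat" where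
  "walk_weight w xs = (\<Sum>i < length xs - 1. w (xs ! i) (xs ! Suc i))"

text \<open>Weighted shortest-path distance d_G (infinite if unreachable).\<close>
definition dG :: "'a set \<Rightarrow> ('a \<times> 'a) set \<Rightarrow> ('a \<Rightarrow> 'a \<Rightarrow> nat) \<Rightarrow> 'a \<Rightarrow> 'a \<Rightarrow> enat" where
  "dG V E w u x = Inf {enat (walk_weight w xs) | xs. is_walk V E xs u x}"

definition d_via :: "'a set \<Rightarrow> ('a \<times> 'a) set \<Rightarrow> ('a \<Rightarrow> 'a \<Rightarrow> nat) \<Rightarrow> nat \<Rightarrow> ('a \<Rightarrow> nat) \<Rightarrow> 'a \<Rightarrow> 'a \<Rightarrow> enat" where
  "d_via V E w r \<delta> u x = enat (r - \<delta> u) + dG V E w u x"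

definition d_super :: "'a set \<Rightarrow> ('a \<times> 'a) set \<Rightarrow> ('a \<Rightarrow> 'a \<Rightarrow> nat) \<Rightarrow> nat \<Rightarrow> ('a \<Rightarrow> nat) \<Rightarrow> 'a \<Rightarrow> enat" where
  "d_super V E w r \<delta> x = Min ((\<lambda>u. d_via V E w r \<delta> u x) ` V)"

definition center :: "'a set \<Rightarrow> ('a \<times> 'a) set \<Rightarrow> ('a \<Rightarrow> 'a \<Rightarrow> nat) \<Rightarrow> ('a \<Rightarrow> nat) \<Rightarrow> nat \<Rightarrow> ('a \<Rightarrow> nat) \<Rightarrow> 'a \<Rightarrow> 'a" where
  "center V E w ID r \<delta> x = (THE c. c \<in> V \<and> d_via V E w r \<delta> c x = d_super V E w r \<delta> x \<and>
       (\<forall>u \<in> V. d_via V E w r \<delta> u x = d_super V E w r \<delta> x \<longrightarrow> ID c \<le> ID u))"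

end

theory Submission
  imports Defs
begin

text \<open>
  Take a union bound over the possible centers a of u and fix all shifts except that of a.  The
  event c_u = a is upward closed in the shift of a, say it holds iff the shift is at least t.  Once
  the shift reaches t + 2 w(u,v), a also beats every other candidate at v, because d_G(-,u) and
  d_G(-,v) differ by at most w(u,v).  Hence c_u = a \<noteq> c_v confines the shift to the window
  [t, t + 2w), which by memorylessness has probability at most 2wp Pr[shift \<ge> t], plus
  (1-p)^(r+1-2w) when the window reaches the cap r.  As the events c_u = a are disjoint, summing
  over a gives 2wp + n (1-p)^(r+1-2w), and when 4pw < 1 (otherwise there is nothing to prove) the
  choice of r makes the second term at most 2p.
\<close>

definition geom_cap_mass :: "real \<Rightarrow> nat \<Rightarrow> nat \<Rightarrow> real" where
  "geom_cap_mass p r i = (if i < r then p * (1 - p) ^ i else if i = r then (1 - p) ^ r else 0)"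

lemma sum_geometric_interval:
  fixes p :: real
  shows "(\<Sum>j\<in>{i..<i+m}. p * (1 - p) ^ j) = (1 - p) ^ i - (1 - p) ^ (i + m)"
  by (induction m) (auto simp: algebra_simps)

lemma pmf_geom_cap:
  assumes "0 \<le> p" "p \<le> 1"
  shows "pmf (geom_cap p r) i = geom_cap_mass p r i"
proof -
  have nonneg: "0 \<le> geom_cap_mass p r j" for j
    using assms by (simp add: geom_cap_mass_def)
  have "(\<Sum>j\<le>r. geom_cap_mass p r j) = (\<Sum>j\<in>{0..<r}. p * (1 - p) ^ j) + (1 - p) ^ r"
    by (simp add: lessThan_Suc_atMost[symmetric] atLeast0LessThan geom_cap_mass_def)
  also have "\<dots> = 1"
    using sum_geometric_interval[of p 0 r] by simp
  finally have sum_one: "(\<Sum>j\<le>r. geom_cap_mass p r j) = 1" .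
  have "(\<integral>\<^sup>+j. ennreal (geom_cap_mass p r j) \<partial>count_space UNIV) = (\<Sum>j\<le>r. ennreal (geom_cap_mass p r j))"
    by (rule nn_integral_count_space') (auto simp: geom_cap_mass_def)
  also have "\<dots> = 1"
    using sum_one by (simp add: sum_ennreal nonneg)
  moreover have "geom_cap p r = embed_pmf (geom_cap_mass p r)"
    by (simp add: geom_cap_def geom_cap_mass_def[abs_def])
  ultimately show ?thesis
    by (simp add: pmf_embed_pmf nonneg)
qed

lemma measure_geom_cap_Int_atMost:
  assumes "0 \<le> p" "p \<le> 1"
  shows "measure_pmf.prob (geom_cap p r) S = measure_pmf.prob (geom_cap p r) (S \<inter> {..r})"
  using assms
  by (intro measure_prob_cong_0) (auto simp: set_pmf_eq pmf_geom_cap geom_cap_mass_def)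

lemma measure_geom_cap_atLeast:
  assumes "0 \<le> p" "p \<le> 1" "t \<le> r"
  shows "measure_pmf.prob (geom_cap p r) {t..} = (1 - p) ^ t"
proof -
  have "{t..} \<inter> {..r} = insert r {t..<r}"
    using assms(3) by auto
  then have "measure_pmf.prob (geom_cap p r) {t..}
      = geom_cap_mass p r r + (\<Sum>i\<in>{t..<r}. geom_cap_mass p r i)"
    using assms by (simp add: measure_geom_cap_Int_atMost[of p] measure_measure_pmf_finite pmf_geom_cap)
  also have "(\<Sum>i\<in>{t..<r}. geom_cap_mass p r i) = (\<Sum>i\<in>{t..<t+(r-t)}. p * (1 - p) ^ i)"
    using assms(3) by (auto simp: geom_cap_mass_def intro!: sum.cong)
  finally show ?thesis
    using assms(3) sum_geometric_interval[of p t "r - t"] by (simp add: geom_cap_mass_def)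
qed

lemma measure_geom_cap_window_le:
  assumes p: "0 \<le> p" "p \<le> 1" and t: "t \<le> r"
  shows "measure_pmf.prob (geom_cap p r) {t..<t+k} \<le> k * p * (1 - p) ^ t + (1 - p) ^ (r + 1 - k)"
proof (cases "t + k \<le> r")
  case True
  have "{t..} = {t..<t+k} \<union> {t+k..}" "{t..<t+k} \<inter> {t+k..} = {}"
    by auto
  then have "measure_pmf.prob (geom_cap p r) {t..<t+k} = (1 - p) ^ t - (1 - p) ^ (t + k)"
    using measure_pmf.finite_measure_Union[of "{t..<t+k}" "geom_cap p r" "{t+k..}"]
      measure_geom_cap_atLeast[OF p t] measure_geom_cap_atLeast[OF p True] by simp
  also have "\<dots> = (1 - p) ^ t * (1 - (1 - p) ^ k)"
    by (simp add: power_add algebra_simps)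
  also have "\<dots> \<le> (1 - p) ^ t * (k * p)"
    using Bernoulli_inequality[of "-p" k] p by (intro mult_left_mono) simp_all
  finally show ?thesis
    using p by (simp add: mult_ac add_increasing2)
next
  case False
  have "measure_pmf.prob (geom_cap p r) {t..<t+k} \<le> measure_pmf.prob (geom_cap p r) {t..}"
    by (rule measure_pmf.finite_measure_mono) auto
  also have "\<dots> \<le> (1 - p) ^ (r + 1 - k)"
    using False p by (simp add: measure_geom_cap_atLeast[OF p t] power_decreasing)
  moreover have "0 \<le> k * p * (1 - p) ^ t"
    using p by simp
  ultimately show ?thesis
    by linarith
qed

lemma measure_geom_cap_le_threshold:
  assumes p: "0 \<le> p" "p \<le> 1"
    and "A \<subseteq> T"
    and up_closed: "\<And>y0 y1. y0 \<in> T \<Longrightarrow> y0 \<le> y1 \<Longrightarrow> y1 \<le> r \<Longrightarrow> y1 \<in> T"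
    and far: "\<And>y0 y1. y0 \<in> T \<Longrightarrow> y0 + k \<le> y1 \<Longrightarrow> y1 \<le> r \<Longrightarrow> y1 \<notin> A"
  shows "measure_pmf.prob (geom_cap p r) A
           \<le> k * p * measure_pmf.prob (geom_cap p r) T + (1 - p) ^ (r + 1 - k)"
proof (cases "T \<inter> {..r} = {}")
  case True
  then have "A \<inter> {..r} = {}"
    using \<open>A \<subseteq> T\<close> by blast
  then show ?thesis
    using measure_geom_cap_Int_atMost[OF p, of r A] p by simp
next
  case False
  define t where "t = Min (T \<inter> {..r})"
  have t: "t \<in> T" "t \<le> r"
    using Min_in[OF _ False] by (auto simp: t_def)
  have t_least: "t \<le> y" if "y \<in> T" "y \<le> r" for y
    using Min_le[of "T \<inter> {..r}" y] that by (simp add: t_def)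
  have "T \<inter> {..r} = {t..} \<inter> {..r}"
    using t_least up_closed[OF t(1)] by auto
  then have T_eq: "measure_pmf.prob (geom_cap p r) T = (1 - p) ^ t"
    by (metis measure_geom_cap_Int_atMost[OF p] measure_geom_cap_atLeast[OF p t(2)])
  have "A \<inter> {..r} \<subseteq> {t..<t+k}"
  proof
    fix y assume y: "y \<in> A \<inter> {..r}"
    then have "t \<le> y" "\<not> t + k \<le> y"
      using \<open>A \<subseteq> T\<close> t_least far[OF t(1)] by auto
    then show "y \<in> {t..<t+k}"
      by simp
  qed
  then have "measure_pmf.prob (geom_cap p r) A \<le> measure_pmf.prob (geom_cap p r) {t..<t+k}"
    using measure_geom_cap_Int_atMost[OF p, of r A] by (simp add: measure_pmf.finite_measure_mono)
  also have "\<dots> \<le> k * p * (1 - p) ^ t + (1 - p) ^ (r + 1 - k)"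
    by (rule measure_geom_cap_window_le[OF p t(2)])
  finally show ?thesis
    by (simp add: T_eq)
qed

lemma emeasure_Pi_pmf_fun_upd:
  assumes "finite V" "a \<in> V"
  shows "emeasure (Pi_pmf V d F) S
           = (\<integral>\<^sup>+g. emeasure (F a) {y. g(a := y) \<in> S} \<partial>Pi_pmf (V - {a}) d F)"
proof -
  have "Pi_pmf V d F = Pi_pmf (insert a (V - {a})) d F"
    using assms(2) by (simp add: insert_absorb)
  also have "\<dots> = bind_pmf (Pi_pmf (V - {a}) d F) (\<lambda>g. map_pmf (\<lambda>y. g(a := y)) (F a))"
    using assms(1) by (subst Pi_pmf_insert') (auto simp: bind_commute_pmf[of "F a"] map_pmf_def)
  finally show ?thesis
    by (simp add: vimage_def)
qed

lemma measure_Pi_pmf_le_by_coordinate: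
  fixes c q :: real
  assumes "finite V" "a \<in> V" "0 \<le> c" "0 \<le> q"
    and bound: "\<And>g. measure_pmf.prob (F a) {y. g(a := y) \<in> A}
                     \<le> c * measure_pmf.prob (F a) {y. g(a := y) \<in> B} + q"
  shows "measure_pmf.prob (Pi_pmf V d F) A \<le> c * measure_pmf.prob (Pi_pmf V d F) B + q"
proof -
  let ?R = "Pi_pmf (V - {a}) d F"
  have "ennreal (measure_pmf.prob (Pi_pmf V d F) A) = (\<integral>\<^sup>+g. emeasure (F a) {y. g(a := y) \<in> A} \<partial>?R)"
    using emeasure_Pi_pmf_fun_upd[OF assms(1,2)] by (simp add: measure_pmf.emeasure_eq_measure)
  also have "\<dots> \<le> (\<integral>\<^sup>+g. ennreal c * emeasure (F a) {y. g(a := y) \<in> B} + ennreal q \<partial>?R)"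
  proof (rule nn_integral_mono)
    fix g
    have "emeasure (F a) {y. g(a := y) \<in> A} \<le> ennreal (c * measure_pmf.prob (F a) {y. g(a := y) \<in> B} + q)"
      using bound[of g] by (simp add: measure_pmf.emeasure_eq_measure ennreal_leI)
    then show "emeasure (F a) {y. g(a := y) \<in> A} \<le> ennreal c * emeasure (F a) {y. g(a := y) \<in> B} + ennreal q"
      using assms(3,4) by (simp add: measure_pmf.emeasure_eq_measure ennreal_plus ennreal_mult)
  qed
  also have "\<dots> = ennreal c * (\<integral>\<^sup>+g. emeasure (F a) {y. g(a := y) \<in> B} \<partial>?R) + ennreal q"
    by (subst nn_integral_add) (auto simp: nn_integral_cmult measure_pmf.emeasure_space_1)
  also have "\<dots> = ennreal (c * measure_pmf.prob (Pi_pmf V d F) B + q)"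
    using assms(3,4) emeasure_Pi_pmf_fun_upd[OF assms(1,2), of d F B]
    by (simp add: measure_pmf.emeasure_eq_measure ennreal_plus ennreal_mult)
  finally show ?thesis
    using assms(3,4) by (subst (asm) ennreal_le_iff) auto
qed

lemma measure_pmf_neq_le_sum_by_value:
  fixes M :: "'b pmf" and f g :: "'b \<Rightarrow> 'a" and c q :: real
  assumes "finite V" "\<And>x. f x \<in> V" "0 \<le> c"
    and bound: "\<And>a. a \<in> V \<Longrightarrow> measure_pmf.prob M {x. f x = a \<and> g x \<noteq> a}
                                 \<le> c * measure_pmf.prob M {x. f x = a} + q"
  shows "measure_pmf.prob M {x. f x \<noteq> g x} \<le> c + card V * q"
proof -
  have "disjoint_family_on (\<lambda>a. {x. f x = a}) V"
    by (auto simp: disjoint_family_on_def)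
  then have "(\<Sum>a\<in>V. measure_pmf.prob M {x. f x = a}) = measure_pmf.prob M (\<Union>a\<in>V. {x. f x = a})"
    by (simp add: measure_pmf.finite_measure_finite_Union[OF assms(1)])
  then have sum_le_1: "(\<Sum>a\<in>V. measure_pmf.prob M {x. f x = a}) \<le> 1"
    by simp
  have "{x. f x \<noteq> g x} \<subseteq> (\<Union>a\<in>V. {x. f x = a \<and> g x \<noteq> a})"
    using assms(2) by (auto intro!: UN_I[of "f _"])
  then have "measure_pmf.prob M {x. f x \<noteq> g x} \<le> measure_pmf.prob M (\<Union>a\<in>V. {x. f x = a \<and> g x \<noteq> a})"
    by (rule measure_pmf.finite_measure_mono) simp
  also have "\<dots> \<le> (\<Sum>a\<in>V. measure_pmf.prob M {x. f x = a \<and> g x \<noteq> a})"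
    by (rule measure_pmf.finite_measure_subadditive_finite[OF assms(1)]) simp
  also have "\<dots> \<le> (\<Sum>a\<in>V. c * measure_pmf.prob M {x. f x = a} + q)"
    by (intro sum_mono bound)
  also have "\<dots> = c * (\<Sum>a\<in>V. measure_pmf.prob M {x. f x = a}) + card V * q"
    by (simp add: sum.distrib sum_distrib_left)
  also have "\<dots> \<le> c + card V * q"
    using mult_left_le[OF sum_le_1 assms(3)] by simp
  finally show ?thesis .
qed

lemma is_walk_snoc:
  assumes walk: "is_walk V E xs c u" and "(u, v) \<in> E" "v \<in> V"
  shows "is_walk V E (xs @ [v]) c v"
  unfolding is_walk_def
proof (intro conjI allI impI)
  have xs: "xs \<noteq> []" "last xs = u" "hd xs = c" "set xs \<subseteq> V"
    using walk by (auto simp: is_walk_def)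
  show "xs @ [v] \<noteq> []" "last (xs @ [v]) = v"
    by simp_all
  show "set (xs @ [v]) \<subseteq> V" "hd (xs @ [v]) = c"
    using xs assms(3) by simp_all
  fix i assume i: "i < length (xs @ [v]) - 1"
  show "((xs @ [v]) ! i, (xs @ [v]) ! Suc i) \<in> E"
  proof (cases "i < length xs - 1")
    case True
    then show ?thesis
      using walk by (auto simp: is_walk_def nth_append)
  next
    case False
    then have "i = length xs - 1"
      using i by simp
    then show ?thesis
      using xs assms(2) by (auto simp: nth_append last_conv_nth)
  qed
qed

lemma walk_weight_snoc:
  assumes "xs \<noteq> []" "last xs = u"
  shows "walk_weight w (xs @ [v]) = walk_weight w xs + w u v"
proof -
  obtain m where m: "length xs = Suc m"
    using assms(1) by (cases xs) auto
  have "(\<Sum>i<m. w ((xs @ [v]) ! i) ((xs @ [v]) ! Suc i)) = walk_weight w xs"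
    using m unfolding walk_weight_def by (intro sum.cong) (auto simp: nth_append)
  moreover have "(xs @ [v]) ! m = u" "(xs @ [v]) ! Suc m = v"
    using m assms by (auto simp: nth_append last_conv_nth)
  ultimately show ?thesis
    using m by (simp add: walk_weight_def)
qed

lemma dG_le_edge:
  assumes "(u, v) \<in> E" "v \<in> V"
  shows "dG V E w c v \<le> dG V E w c u + enat (w u v)"
proof (cases "{enat (walk_weight w xs) | xs. is_walk V E xs c u} = {}")
  case False
  let ?S = "{enat (walk_weight w xs) | xs. is_walk V E xs c u}"
  have "Inf ?S \<in> ?S"
    using False unfolding Inf_enat_def by (auto intro: LeastI)
  then obtain xs where xs: "is_walk V E xs c u" "dG V E w c u = enat (walk_weight w xs)"
    unfolding dG_def by auto
  have "dG V E w c v \<le> enat (walk_weight w (xs @ [v]))"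
    unfolding dG_def using is_walk_snoc[OF xs(1) assms] by (intro Inf_lower) auto
  also have "\<dots> = dG V E w c u + enat (w u v)"
    using xs by (simp add: walk_weight_snoc is_walk_def)
  finally show ?thesis .
next
  case True
  then have "dG V E w c u = \<infinity>"
    by (simp add: dG_def top_enat_def)
  then show ?thesis
    by simp
qed

definition id_argmin :: "'a set \<Rightarrow> ('a \<Rightarrow> nat) \<Rightarrow> ('a \<Rightarrow> 'b::linorder) \<Rightarrow> 'a \<Rightarrow> bool" where
  "id_argmin V ID K c \<longleftrightarrow>
     c \<in> V \<and> (\<forall>c'\<in>V. K c \<le> K c') \<and> (\<forall>c'\<in>V. K c' = K c \<longrightarrow> ID c \<le> ID c')"

lemma id_argmin_exists:
  assumes "finite V" "V \<noteq> {}"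
  shows "\<exists>c. id_argmin V ID K c"
proof -
  obtain c0 where c0: "c0 \<in> V" "\<And>c. c \<in> V \<Longrightarrow> K c0 \<le> K c"
    using ex_min_if_finite[of "K ` V"] assms by (auto simp: not_less)
  obtain c where "c \<in> V \<and> K c = K c0" "\<And>c'. c' \<in> V \<and> K c' = K c0 \<longrightarrow> ID c \<le> ID c'"
    using ex_has_least_nat[of "\<lambda>c. c \<in> V \<and> K c = K c0" c0 ID] c0 by blast
  then show ?thesis
    using c0 by (auto simp: id_argmin_def)
qed

lemma id_argmin_unique:
  assumes "inj_on ID V" "id_argmin V ID K c" "id_argmin V ID K c'"
  shows "c = c'"
  using assms unfolding id_argmin_def inj_on_def by (metis order_antisym)

lemma center_eq_iff:
  assumes "finite V" "V \<noteq> {}" "inj_on ID V"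
  shows "center V E w ID r \<delta> x = c \<longleftrightarrow> id_argmin V ID (\<lambda>c. d_via V E w r \<delta> c x) c"
proof -
  let ?K = "\<lambda>c. d_via V E w r \<delta> c x"
  have Min_iff: "?K c = Min (?K ` V) \<longleftrightarrow> (\<forall>c'\<in>V. ?K c \<le> ?K c')" if "c \<in> V" for c
    using Min_eq_iff[of "?K ` V" "?K c"] assms(1,2) that by auto
  have "(c \<in> V \<and> ?K c = Min (?K ` V) \<and> (\<forall>u\<in>V. ?K u = Min (?K ` V) \<longrightarrow> ID c \<le> ID u))
        \<longleftrightarrow> id_argmin V ID ?K c" for c
  proof
    assume c: "c \<in> V \<and> ?K c = Min (?K ` V) \<and> (\<forall>u\<in>V. ?K u = Min (?K ` V) \<longrightarrow> ID c \<le> ID u)"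
    moreover have "\<forall>c'\<in>V. ?K c \<le> ?K c'"
      using c Min_iff by blast
    ultimately show "id_argmin V ID ?K c"
      by (auto simp: id_argmin_def)
  next
    assume c: "id_argmin V ID ?K c"
    then have "?K c = Min (?K ` V)"
      using Min_iff by (simp add: id_argmin_def)
    then show "c \<in> V \<and> ?K c = Min (?K ` V) \<and> (\<forall>u\<in>V. ?K u = Min (?K ` V) \<longrightarrow> ID c \<le> ID u)"
      using c by (auto simp: id_argmin_def)
  qed
  then have "center V E w ID r \<delta> x = (THE c. id_argmin V ID ?K c)"
    unfolding center_def d_super_def by presburger
  moreover have "\<exists>!c. id_argmin V ID ?K c"
    using id_argmin_exists[OF assms(1,2)] id_argmin_unique[OF assms(3)] by blast
  ultimately show ?thesis
    by (metis the1_equality)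
qed

lemma center_in:
  assumes "finite V" "V \<noteq> {}" "inj_on ID V"
  shows "center V E w ID r \<delta> x \<in> V"
  using center_eq_iff[OF assms, of E w r \<delta> x "center V E w ID r \<delta> x"] by (simp add: id_argmin_def)

lemma id_argmin_shift:
  fixes K K' :: "'a \<Rightarrow> enat"
  assumes win: "id_argmin V ID K a"
    and lowered: "K' a + enat k \<le> K a"
    and others: "\<And>c. c \<in> V \<Longrightarrow> c \<noteq> a \<Longrightarrow> K c \<le> K' c + enat k"
  shows "id_argmin V ID K' a"
  unfolding id_argmin_def
proof (intro conjI ballI impI)
  show "a \<in> V"
    using win by (simp add: id_argmin_def)
  fix c assume c: "c \<in> V"
  have K_le: "K a \<le> K c"
    using win c by (simp add: id_argmin_def)
  have "K' a + enat k \<le> K' c + enat k" if "c \<noteq> a"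
    using order_trans[OF order_trans[OF lowered K_le] others[OF c that]] .
  then show "K' a \<le> K' c"
    by (cases "c = a") simp_all
  assume tie: "K' c = K' a"
  show "ID a \<le> ID c"
  proof (cases "c = a")
    case False
    have "K c \<le> K' a + enat k"
      using others[OF c False] tie by simp
    then have "K c = K a"
      using order_trans[OF _ lowered] K_le by (blast intro: antisym)
    then show ?thesis
      using win c by (simp add: id_argmin_def)
  qed simp
qed

lemma center_fun_upd_mono:
  assumes "finite V" "inj_on ID V" "a \<in> V"
    and center_a: "center V E w ID r (\<delta>(a := y0)) x = a" and "y0 \<le> y1"
  shows "center V E w ID r (\<delta>(a := y1)) x = a"
proof -
  have "V \<noteq> {}"
    using assms(3) by auto
  note center = center_eq_iff[OF assms(1) this assms(2)]
  have "id_argmin V ID (\<lambda>c. d_via V E w r (\<delta>(a := y0)) c x) a"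
    using center_a center by simp
  then have "id_argmin V ID (\<lambda>c. d_via V E w r (\<delta>(a := y1)) c x) a"
    by (rule id_argmin_shift[where k = 0]) (use \<open>y0 \<le> y1\<close> in \<open>simp_all add: d_via_def diff_le_mono2\<close>)
  then show ?thesis
    using center by simp
qed

lemma center_fun_upd_across_edge:
  assumes "finite V" "inj_on ID V" "a \<in> V"
    and edge: "(u, v) \<in> E" "(v, u) \<in> E" "u \<in> V" "v \<in> V" "w v u = w u v"
    and center_a: "center V E w ID r (\<delta>(a := y0)) u = a"
    and shift: "y0 + 2 * w u v \<le> y1" "y1 \<le> r"
  shows "center V E w ID r (\<delta>(a := y1)) v = a"
proof -
  have "V \<noteq> {}"
    using assms(3) by auto
  note center = center_eq_iff[OF assms(1) this assms(2)]
  have uv: "dG V E w c v \<le> dG V E w c u + enat (w u v)" for c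
    using dG_le_edge[OF edge(1,4)] .
  have vu: "dG V E w c u \<le> dG V E w c v + enat (w u v)" for c
    using dG_le_edge[OF edge(2,3), of w c] edge(5) by simp
  have "enat (r - y1) + dG V E w a v + enat (w u v)
        \<le> enat (r - y1) + (dG V E w a u + enat (w u v)) + enat (w u v)"
    using uv[of a] by (intro add_right_mono add_left_mono)
  also have "\<dots> = enat (r - y1 + 2 * w u v) + dG V E w a u"
    by (simp add: algebra_simps)
  also have "\<dots> \<le> enat (r - y0) + dG V E w a u"
    using shift by (intro add_right_mono) simp
  finally have lowered: "d_via V E w r (\<delta>(a := y1)) a v + enat (w u v) \<le> d_via V E w r (\<delta>(a := y0)) a u"
    by (simp add: d_via_def)
  have "id_argmin V ID (\<lambda>c. d_via V E w r (\<delta>(a := y0)) c u) a"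
    using center_a center by simp
  then have "id_argmin V ID (\<lambda>c. d_via V E w r (\<delta>(a := y1)) c v) a"
    using lowered
    by (rule id_argmin_shift[where K = "\<lambda>c. d_via V E w r (\<delta>(a := y0)) c u"
                               and K' = "\<lambda>c. d_via V E w r (\<delta>(a := y1)) c v"])
       (simp add: d_via_def add.assoc add_left_mono vu)
  then show ?thesis
    using center by simp
qed

lemma prob_edge_cut_at_center_le:
  fixes p :: real
  assumes "finite V" "inj_on ID V" "a \<in> V" and p: "0 \<le> p" "p \<le> 1"
    and edge: "(u, v) \<in> E" "(v, u) \<in> E" "u \<in> V" "v \<in> V" "w v u = w u v"
  shows "measure_pmf.prob (Pi_pmf V 0 (\<lambda>_. geom_cap p r))
             {\<delta>. center V E w ID r \<delta> u = a \<and> center V E w ID r \<delta> v \<noteq> a}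
           \<le> 2 * w u v * p * measure_pmf.prob (Pi_pmf V 0 (\<lambda>_. geom_cap p r))
                                {\<delta>. center V E w ID r \<delta> u = a}
             + (1 - p) ^ (r + 1 - 2 * w u v)"
proof -
  let ?A = "{\<delta>. center V E w ID r \<delta> u = a \<and> center V E w ID r \<delta> v \<noteq> a}"
  let ?T = "{\<delta>. center V E w ID r \<delta> u = a}"
  have "measure_pmf.prob (geom_cap p r) {y. g(a := y) \<in> ?A}
        \<le> real (2 * w u v) * p * measure_pmf.prob (geom_cap p r) {y. g(a := y) \<in> ?T}
          + (1 - p) ^ (r + 1 - 2 * w u v)" for g
  proof (rule measure_geom_cap_le_threshold[OF p])
    show "{y. g(a := y) \<in> ?A} \<subseteq> {y. g(a := y) \<in> ?T}"
      by blast
    show "y1 \<in> {y. g(a := y) \<in> ?T}" if "y0 \<in> {y. g(a := y) \<in> ?T}" "y0 \<le> y1" "y1 \<le> r" for y0 y1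
      using center_fun_upd_mono[OF assms(1-3), of E w r g y0 u y1] that by simp
    show "y1 \<notin> {y. g(a := y) \<in> ?A}" if "y0 \<in> {y. g(a := y) \<in> ?T}" "y0 + 2 * w u v \<le> y1" "y1 \<le> r"
      for y0 y1
      using center_fun_upd_across_edge[OF assms(1-3) edge, of r g y0 y1] that by simp
  qed
  then show ?thesis
    using p
    by (intro measure_Pi_pmf_le_by_coordinate[where F = "\<lambda>_. geom_cap p r", OF assms(1,3)]) simp_all
qed

lemma prob_edge_cut_le:
  fixes p :: real
  assumes "finite V" "inj_on ID V" and p: "0 \<le> p" "p \<le> 1"
    and edge: "(u, v) \<in> E" "(v, u) \<in> E" "u \<in> V" "v \<in> V" "w v u = w u v"
  shows "measure_pmf.prob (Pi_pmf V 0 (\<lambda>_. geom_cap p r))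
             {\<delta>. center V E w ID r \<delta> u \<noteq> center V E w ID r \<delta> v}
           \<le> 2 * w u v * p + card V * (1 - p) ^ (r + 1 - 2 * w u v)"
proof -
  have center_u: "center V E w ID r \<delta> u \<in> V" for \<delta>
    using center_in[OF assms(1) _ assms(2)] edge(3) by blast
  show ?thesis
    using measure_pmf_neq_le_sum_by_value[OF assms(1) center_u _ prob_edge_cut_at_center_le[OF assms(1,2) _ p edge]] p
    by simp
qed

lemma mult_geometric_tail_le:
  fixes p :: real and n r k :: nat
  assumes p: "0 < p" "p \<le> 1" and n: "1 \<le> n"
    and r: "real r \<ge> (1 / p) * ln (real n ^ 2 / p) + 1 / (4 * p)"
    and k: "4 * p * k < 1"
  shows "real n * (1 - p) ^ (r + 1 - 2 * k) \<le> 2 * p"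
proof -
  define m where "m = r + 1 - 2 * k"
  define L where "L = ln (real n ^ 2 / p)"
  have "p * real r \<ge> L + 1 / 4"
    using mult_left_mono[OF r, of p] p by (simp add: L_def distrib_left)
  moreover have "p * real m \<ge> p * (real r + 1 - 2 * real k)"
    using p by (intro mult_left_mono) (auto simp: m_def)
  moreover have "p * (real r + 1 - 2 * real k) = p * real r + p - 2 * (p * real k)"
    by (simp add: algebra_simps)
  moreover have "4 * (p * real k) < 1"
    using k by (simp add: mult.assoc)
  ultimately have exponent: "L - 1 / 4 \<le> p * real m"
    using p by linarith
  have "0 < real n ^ 2 / p"
    using p n by simp
  have "(1 - p) ^ m \<le> exp (- p) ^ m"
    using p exp_ge_add_one_self[of "- p"] by (intro power_mono) auto
  also have "\<dots> = exp (- (p * real m))"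
    by (simp add: exp_of_nat_mult[symmetric] mult_ac)
  also have "\<dots> \<le> exp (1 / 4 - L)"
    using exponent by simp
  also have "\<dots> = exp (1 / 4) * p / real n ^ 2"
    using \<open>0 < real n ^ 2 / p\<close> by (simp add: L_def exp_diff)
  finally have "real n * (1 - p) ^ m \<le> real n * (exp (1 / 4) * p / real n ^ 2)"
    by (rule mult_left_mono) simp
  also have "\<dots> = exp (1 / 4) * p / real n"
    using n by (simp add: power2_eq_square)
  also have "\<dots> \<le> exp (1 / 4) * p"
    using p n by (simp add: divide_le_eq mult_le_cancel_left1 mult_less_0_iff)
  also have "\<dots> \<le> 2 * p"
    using real_exp_bound_lemma[of "1 / 4"] p by (intro mult_right_mono) auto
  finally show ?thesis
    by (simp add: m_def)
qed

theorem lemma12: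
  fixes V :: "'a set" and E :: "('a \<times> 'a) set" and w :: "'a \<Rightarrow> 'a \<Rightarrow> nat"
    and W :: nat and ID :: "'a \<Rightarrow> nat" and \<beta> p :: real and r n :: nat and u v :: 'a
  assumes finV: "finite V"
    and E_sub: "E \<subseteq> V \<times> V"
    and E_sym: "\<And>a b. (a, b) \<in> E \<Longrightarrow> (b, a) \<in> E"
    and E_irrefl: "\<And>a. (a, a) \<notin> E"
    and w_sym: "\<And>a b. (a, b) \<in> E \<Longrightarrow> w a b = w b a"
    and w_range: "\<And>a b. (a, b) \<in> E \<Longrightarrow> w a b \<in> {1..W}"
    and ID_inj: "inj_on ID V"
    and n_def: "n = card V"
    and beta: "0 < \<beta>" "\<beta> \<le> 1"
    and p_def: "p = \<beta> / 4"
    and r_def: "r = nat \<lceil>(1 / p) * ln (real n ^ 2 / p) + 1 / (4 * p)\<rceil>"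
    and edge: "(u, v) \<in> E"
  shows "measure_pmf.prob (Pi_pmf V 0 (\<lambda>_. geom_cap p r))
           {\<delta>. center V E w ID r \<delta> u \<noteq> center V E w ID r \<delta> v} \<le> 4 * p * real (w u v)"
proof -
  let ?P = "Pi_pmf V 0 (\<lambda>_. geom_cap p r)"
  let ?cut = "{\<delta>. center V E w ID r \<delta> u \<noteq> center V E w ID r \<delta> v}"
  let ?k = "w u v"
  have p: "0 < p" "p \<le> 1"
    using beta p_def by auto
  have uv: "u \<in> V" "v \<in> V"
    using edge E_sub by auto
  have cut_le: "measure_pmf.prob ?P ?cut \<le> 2 * ?k * p + n * (1 - p) ^ (r + 1 - 2 * ?k)"
    using prob_edge_cut_le[OF finV ID_inj _ _ edge E_sym[OF edge] uv w_sym[OF edge, symmetric]] p n_def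
    by simp
  show ?thesis
  proof (cases "4 * p * ?k < 1")
    case True
    have "n * (1 - p) ^ (r + 1 - 2 * ?k) \<le> 2 * p"
    proof (rule mult_geometric_tail_le[OF p _ _ True])
      show "1 \<le> n"
        using finV uv by (auto simp: n_def Suc_le_eq card_gt_0_iff)
      show "(1 / p) * ln (real n ^ 2 / p) + 1 / (4 * p) \<le> real r"
        unfolding r_def by (rule real_nat_ceiling_ge)
    qed
    moreover have "p \<le> p * ?k"
      using w_range[OF edge] p by simp
    ultimately show ?thesis
      using cut_le by (simp add: algebra_simps)
  next
    case False
    then show ?thesis
      using measure_pmf.prob_le_1[of ?P ?cut] by linarith
  qed
qed

end
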